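(* Let $\mathcal{D}\subset\mathbb{R}^n$ be a direction set and $\mathcal{D}^W\subset\mathcal{D}$ a grid direction set of width $W$ with directional resolution $d\theta<\pi/2$. Then for any smooth function $u:\mathbb{R}^n\to\mathbb{R}$ and point $x$, $$\lambda^h_{\mathcal{D}^W}u(x)-\lambda_{\mathcal{D}}u(x)=O\big((Wh)^2+d\theta\big).$$
   Context: A direction set $\mathcal{D}\subset\mathbb{R}^n$ spans $\mathbb{R}^n$, is symmetric ($d\in\mathcal{D}\Rightarrow-d\in\mathcal{D}$) and $0\notin\mathcal{D}$. A grid direction set $\mathcal{D}^W$ is a direction set consisting of vectors in $\mathbb{Z}^n$; its width $W$ is $\max_{v\in\mathcal{D}^W}\|v\|_\infty$. For smooth $u$, $\lambda_{\mathcal{D}}u(x)=\inf_{v\in\mathcal{D}}\frac{v^\intercal D^2u(x)v}{|v|^2}$. For $h>0$ and $v\in\mathcal{D}^W$, $D^h_{vv}u(x)=\frac{u(x+hv)-2u(x)+u(x-hv)}{h^2\|v\|^2}$, and $\lambda^h_{\mathcal{D}^W}u(x)=\min_{v\in\mathcal{D}^W}D^h_{vv}u(x)$. The directional resolution of $\mathcal{D}^W$ with respect to $\mathcal{D}$ is $d\theta=\max_{w\in\mathcal{D}}\min_{v\in\mathcal{D}^W}\cos^{-1}(\hat w^\intercal\hat v)$, where $\hat w=w/|w|$, $\hat v=v/|v|$ (the largest angle between a vector of $\mathcal{D}$ and its best approximation in $\mathcal{D}^W$). *)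

theory Defs
  imports "HOL-Analysis.Analysis"
begin

text \<open>Smoothness (C-infinity): there is a family of higher derivatives
  Dk k y [v1,...,vk] (the k-th Frechet derivative at y applied to v1..vk) such that
  the 0-th one is u and each one is Frechet differentiable with derivative the next one.\<close>
definition smooth_fun :: "('a::euclidean_space \<Rightarrow> real) \<Rightarrow> bool" where
  "smooth_fun u \<longleftrightarrow> (\<exists>Dk :: nat \<Rightarrow> 'a \<Rightarrow> 'a list \<Rightarrow> real.
      (\<forall>y. Dk 0 y [] = u y) \<and>
      (\<forall>k y vs. length vs = k \<longrightarrow>
          ((\<lambda>z. Dk k z vs) has_derivative (\<lambda>w. Dk (Suc k) y (w # vs))) (at y)))"

definition hess_form :: "('a::euclidean_space \<Rightarrow> real) \<Rightarrow> 'a \<Rightarrow> 'a \<Rightarrow> real" where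
  "hess_form u x v = frechet_derivative (\<lambda>y. frechet_derivative u (at y) v) (at x) v"

definition direction_set :: "'a::euclidean_space set \<Rightarrow> bool" where
  "direction_set D \<longleftrightarrow> span D = UNIV \<and> (\<forall>d\<in>D. - d \<in> D) \<and> 0 \<notin> D"

definition grid_direction_set :: "(real^'n) set \<Rightarrow> bool" where
  "grid_direction_set DW \<longleftrightarrow> direction_set DW \<and> finite DW \<and>
      (\<forall>v\<in>DW. \<forall>i. v $ i \<in> \<int>)"

definition grid_width :: "(real^'n) set \<Rightarrow> real" where
  "grid_width DW = Max (infnorm ` DW)"

definition lambda_D :: "'a::euclidean_space set \<Rightarrow> ('a \<Rightarrow> real) \<Rightarrow> 'a \<Rightarrow> real" where
  "lambda_D D u x = (INF v\<in>D. hess_form u x v / (norm v)^2)"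

definition second_diff :: "real \<Rightarrow> 'a::euclidean_space \<Rightarrow> ('a \<Rightarrow> real) \<Rightarrow> 'a \<Rightarrow> real" where
  "second_diff h v u x = (u (x + h *\<^sub>R v) - 2 * u x + u (x - h *\<^sub>R v)) / (h^2 * (norm v)^2)"

definition lambda_h :: "'a::euclidean_space set \<Rightarrow> real \<Rightarrow> ('a \<Rightarrow> real) \<Rightarrow> 'a \<Rightarrow> real" where
  "lambda_h DW h u x = Min ((\<lambda>v. second_diff h v u x) ` DW)"

definition dir_resolution :: "'a::euclidean_space set \<Rightarrow> 'a set \<Rightarrow> real" where
  "dir_resolution D DW =
     (SUP w\<in>D. INF v\<in>DW. arccos ((w /\<^sub>R norm w) \<bullet> (v /\<^sub>R norm v)))"

end

theory Submission
  imports Defs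
begin

text \<open>Along the
  line \<open>t \<mapsto> x + t v\<close> a fourth-order Taylor expansion shows that the centred second difference
  in direction \<open>v\<close> differs from the Rayleigh quotient \<open>D\<^sup>2u(x)(v,v)/|v|\<^sup>2\<close> by
  \<open>O(h\<^sup>2|v|\<^sup>2) = O((Wh)\<^sup>2)\<close>, since grid directions satisfy \<open>|v| \<le> \<surd>n W\<close>; taking minima over
  the grid directions preserves this bound. On the other hand the Rayleigh quotient, viewed as a
  function of the unit vector \<open>v/|v|\<close>, is Lipschitz with constant \<open>2|D\<^sup>2u(x)|\<close>, and chords are
  shorter than arcs, so replacing the infimum over \<open>\<D>\<close> by the minimum over \<open>\<D>\<^sup>W\<close> costs at most
  \<open>2|D\<^sup>2u(x)| d\<theta>\<close>. The constants come from bounding the second and fourth derivatives on a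
  compact neighbourhood of \<open>x\<close>.\<close>

lemma linear_abs_le_norm_sum_Basis:
  fixes f :: "'a::euclidean_space \<Rightarrow> real"
  assumes "linear f"
  shows "\<bar>f w\<bar> \<le> norm w * (\<Sum>b\<in>Basis. \<bar>f b\<bar>)"
proof -
  have "f w = (\<Sum>b\<in>Basis. (w \<bullet> b) * f b)"
    by (subst euclidean_representation[symmetric, of w])
       (simp add: linear_sum[OF assms] linear_scale[OF assms])
  also have "\<bar>\<dots>\<bar> \<le> (\<Sum>b\<in>Basis. \<bar>w \<bullet> b\<bar> * \<bar>f b\<bar>)"
    by (rule order_trans[OF sum_abs]) (simp add: abs_mult)
  also have "\<dots> \<le> (\<Sum>b\<in>Basis. norm w * \<bar>f b\<bar>)"
    by (intro sum_mono mult_right_mono Basis_le_norm) auto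
  finally show ?thesis by (simp add: sum_distrib_left)
qed

lemma sum_lists_length_Suc:
  "(\<Sum>cs\<in>{cs. set cs \<subseteq> A \<and> length cs = Suc n}. f cs) =
     (\<Sum>a\<in>A. \<Sum>bs\<in>{bs. set bs \<subseteq> A \<and> length bs = n}. f (a # bs))"
proof -
  have "inj_on (\<lambda>(bs, a). a # bs) ({bs. set bs \<subseteq> A \<and> length bs = n} \<times> A)"
    by (auto intro: inj_onI)
  then have "(\<Sum>cs\<in>{cs. set cs \<subseteq> A \<and> length cs = Suc n}. f cs) =
      (\<Sum>(bs, a)\<in>{bs. set bs \<subseteq> A \<and> length bs = n} \<times> A. f (a # bs))"
    by (simp add: lists_length_Suc_eq sum.reindex case_prod_unfold)
  also have "\<dots> = (\<Sum>a\<in>A. \<Sum>bs\<in>{bs. set bs \<subseteq> A \<and> length bs = n}. f (a # bs))"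
    by (simp add: sum.cartesian_product[symmetric] sum.swap[of _ _ A])
  finally show ?thesis .
qed

lemma Min_image_diff_le:
  fixes f g :: "'a \<Rightarrow> real"
  assumes "finite S" "S \<noteq> {}" "\<And>v. v \<in> S \<Longrightarrow> \<bar>f v - g v\<bar> \<le> E"
  shows "\<bar>Min (f ` S) - Min (g ` S)\<bar> \<le> E"
proof -
  have "Min (f ` S) \<in> f ` S" "Min (g ` S) \<in> g ` S"
    using assms(1,2) by simp_all
  then obtain a b where "a \<in> S" "Min (f ` S) = f a" "b \<in> S" "Min (g ` S) = g b"
    by (metis imageE)
  moreover have "Min (f ` S) \<le> f b" "Min (g ` S) \<le> g a"
    using \<open>a \<in> S\<close> \<open>b \<in> S\<close> assms(1) by auto
  ultimately show ?thesis using assms(3)[of a] assms(3)[of b] by linarith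
qed

lemma norm_diff_le_arccos:
  fixes a b :: "'a::euclidean_space"
  assumes "norm a = 1" "norm b = 1"
  shows "norm (a - b) \<le> arccos (a \<bullet> b)"
proof -
  have "\<bar>a \<bullet> b\<bar> \<le> 1" using Cauchy_Schwarz_ineq2[of a b] assms by simp
  define t where "t = arccos (a \<bullet> b)"
  have "t \<ge> 0" "cos t = a \<bullet> b"
    unfolding t_def using \<open>\<bar>a \<bullet> b\<bar> \<le> 1\<close> by (auto intro: arccos_lbound cos_arccos)
  have "norm (a - b)^2 = 2 - 2 * (a \<bullet> b)"
    using assms by (simp add: power2_norm_eq_inner inner_diff_left inner_diff_right inner_commute norm_eq_1)
  also have "\<dots> = 4 * (sin (t / 2))^2"
    using cos_double_sin[of "t / 2"] \<open>cos t = a \<bullet> b\<close> by simp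
  also have "\<dots> \<le> 4 * (t / 2)^2"
    using abs_sin_x_le_abs_x[of "t / 2"] unfolding abs_le_square_iff by simp
  also have "\<dots> = t^2" by (simp add: power2_eq_square)
  finally show ?thesis using \<open>t \<ge> 0\<close> unfolding t_def by (simp add: power2_le_iff_abs_le)
qed

lemma arccos_inner_normalized_bounds:
  fixes v w :: "'a::euclidean_space"
  shows "0 \<le> arccos ((w /\<^sub>R norm w) \<bullet> (v /\<^sub>R norm v))"
    and "arccos ((w /\<^sub>R norm w) \<bullet> (v /\<^sub>R norm v)) \<le> pi"
proof -
  have "norm (sgn w) * norm (sgn v) \<le> 1"
    by (simp add: norm_sgn mult_le_one)
  then have "\<bar>sgn w \<bullet> sgn v\<bar> \<le> 1"
    using Cauchy_Schwarz_ineq2[of "sgn w" "sgn v"] by linarith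
  then show "0 \<le> arccos ((w /\<^sub>R norm w) \<bullet> (v /\<^sub>R norm v))"
    and "arccos ((w /\<^sub>R norm w) \<bullet> (v /\<^sub>R norm v)) \<le> pi"
    unfolding sgn_div_norm[symmetric] by (auto intro: arccos_lbound arccos_ubound)
qed

lemma dir_resolution_witness:
  assumes "finite DW" "DW \<noteq> {}" "w \<in> D"
  obtains v where "v \<in> DW" "arccos ((w /\<^sub>R norm w) \<bullet> (v /\<^sub>R norm v)) \<le> dir_resolution D DW"
proof -
  define \<theta> where "\<theta> w = (INF v\<in>DW. arccos ((w /\<^sub>R norm w) \<bullet> (v /\<^sub>R norm v)))" for w
  have "\<theta> w \<in> (\<lambda>v. arccos ((w /\<^sub>R norm w) \<bullet> (v /\<^sub>R norm v))) ` DW"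
    unfolding \<theta>_def using assms(1,2) by (simp add: cInf_eq_Min)
  then obtain v where "v \<in> DW" "\<theta> w = arccos ((w /\<^sub>R norm w) \<bullet> (v /\<^sub>R norm v))"
    by blast
  moreover have "\<theta> w' \<le> pi" for w'
  proof -
    have "\<theta> w' \<le> arccos ((w' /\<^sub>R norm w') \<bullet> (v /\<^sub>R norm v))"
      unfolding \<theta>_def using \<open>v \<in> DW\<close> assms(1) by (intro cINF_lower bdd_below_finite) auto
    also have "\<dots> \<le> pi" by (rule arccos_inner_normalized_bounds)
    finally show ?thesis .
  qed
  then have "\<theta> w \<le> dir_resolution D DW"
    unfolding dir_resolution_def \<theta>_def[symmetric]
    using \<open>w \<in> D\<close> by (intro cSUP_upper bdd_aboveI2) auto
  ultimately show ?thesis using that by simp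
qed

lemma dir_resolution_nonneg:
  assumes "D \<noteq> {}" "finite DW" "DW \<noteq> {}"
  shows "0 \<le> dir_resolution D DW"
proof -
  obtain w where "w \<in> D" using assms(1) by blast
  with dir_resolution_witness[OF assms(2,3) this] show ?thesis
    by (meson arccos_inner_normalized_bounds(1) order_trans)
qed

lemma Min_INF_diff_le_dir_resolution:
  fixes q :: "'a::euclidean_space \<Rightarrow> real"
  assumes "finite DW" "DW \<noteq> {}" "DW \<subseteq> D" "L \<ge> 0" "bdd_below (q ` D)"
    and q: "\<And>v w. v \<in> D \<Longrightarrow> w \<in> D \<Longrightarrow> q v \<le> q w + L * arccos ((w /\<^sub>R norm w) \<bullet> (v /\<^sub>R norm v))"
  shows "\<bar>Min (q ` DW) - (INF w\<in>D. q w)\<bar> \<le> L * dir_resolution D DW"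
proof -
  have "Min (q ` DW) \<in> q ` DW" using assms(1,2) by simp
  then obtain v where "v \<in> D" "Min (q ` DW) = q v"
    using assms(3) by blast
  then have "(INF w\<in>D. q w) \<le> Min (q ` DW)"
    using cINF_lower[OF assms(5)] by simp
  moreover have "Min (q ` DW) - L * dir_resolution D DW \<le> (INF w\<in>D. q w)"
  proof (rule cINF_greatest)
    show "D \<noteq> {}" using assms(2,3) by blast
    fix w assume "w \<in> D"
    then obtain v where v: "v \<in> DW" "arccos ((w /\<^sub>R norm w) \<bullet> (v /\<^sub>R norm v)) \<le> dir_resolution D DW"
      using dir_resolution_witness assms(1,2) by blast
    have "Min (q ` DW) \<le> q v" using v(1) assms(1) by simp
    also have "\<dots> \<le> q w + L * dir_resolution D DW"
      using q[of v w] mult_left_mono[OF v(2) assms(4)] v(1) assms(3) \<open>w \<in> D\<close> by fastforce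
    finally show "Min (q ` DW) - L * dir_resolution D DW \<le> q w" by simp
  qed
  ultimately show ?thesis by linarith
qed

definition hess_quotient :: "('a::euclidean_space \<Rightarrow> real) \<Rightarrow> 'a \<Rightarrow> 'a \<Rightarrow> real" where
  "hess_quotient u x v = hess_form u x v / (norm v)^2"

lemma lambda_D_eq_INF_hess_quotient: "lambda_D D u x = (INF v\<in>D. hess_quotient u x v)"
  by (simp add: lambda_D_def hess_quotient_def)

locale derivative_tower =
  fixes Dk :: "nat \<Rightarrow> 'a::euclidean_space \<Rightarrow> 'a list \<Rightarrow> real"
  assumes has_derivative_tower:
    "length vs = k \<Longrightarrow> ((\<lambda>z. Dk k z vs) has_derivative (\<lambda>w. Dk (Suc k) y (w # vs))) (at y)"
begin

lemma linear_slot: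
  "length pre + length post + 1 = k \<Longrightarrow> linear (\<lambda>w. Dk k y (pre @ w # post))"
proof (induction k arbitrary: y pre post)
  case 0
  then show ?case by simp
next
  case (Suc k)
  show ?case
  proof (cases pre)
    case Nil
    with Suc.prems have "length post = k" by simp
    from has_derivative_bounded_linear[OF has_derivative_tower[OF this]] Nil show ?thesis
      by (simp add: bounded_linear.linear)
  next
    case (Cons a pre')
    have len: "length pre' + length post + 1 = k" using Suc.prems Cons by simp
    have lin: "linear (\<lambda>w. Dk k z (pre' @ w # post))" for z
      using Suc.IH[OF len] .
    have der: "((\<lambda>z. Dk k z (pre' @ w # post)) has_derivative
        (\<lambda>b. Dk (Suc k) y (b # pre' @ w # post))) (at y)" for w
      using has_derivative_tower len by simp
    \<comment> \<open>the derivative of a family that is linear in a slot is linear in that slot, by uniqueness of derivatives\<close>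
    show ?thesis unfolding Cons
    proof (rule linearI)
      fix w1 w2
      have "((\<lambda>z. Dk k z (pre' @ (w1 + w2) # post)) has_derivative
          (\<lambda>b. Dk (Suc k) y (b # pre' @ w1 # post) + Dk (Suc k) y (b # pre' @ w2 # post))) (at y)"
        unfolding linear_add[OF lin] by (intro has_derivative_add der)
      from fun_cong[OF has_derivative_unique[OF der this], of a]
      show "Dk (Suc k) y ((a # pre') @ (w1 + w2) # post) =
          Dk (Suc k) y ((a # pre') @ w1 # post) + Dk (Suc k) y ((a # pre') @ w2 # post)"
        by simp
    next
      fix r w
      have "((\<lambda>z. Dk k z (pre' @ (r *\<^sub>R w) # post)) has_derivative
          (\<lambda>b. r * Dk (Suc k) y (b # pre' @ w # post))) (at y)"
        unfolding linear_scale[OF lin] real_scaleR_def by (intro has_derivative_mult_right der)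
      from fun_cong[OF has_derivative_unique[OF der this], of a]
      show "Dk (Suc k) y ((a # pre') @ (r *\<^sub>R w) # post) = r *\<^sub>R Dk (Suc k) y ((a # pre') @ w # post)"
        by simp
    qed
  qed
qed

lemma continuous_on_tower: "length vs = k \<Longrightarrow> continuous_on S (\<lambda>y. Dk k y vs)"
  using has_derivative_continuous[OF has_derivative_tower]
  by (meson continuous_at_imp_continuous_on)

lemma abs_le_prod_norm_sum_Basis_lists:
  assumes "length pre + length vs = k"
  shows "\<bar>Dk k y (pre @ vs)\<bar> \<le> prod_list (map norm vs) *
           (\<Sum>bs\<in>{bs. set bs \<subseteq> Basis \<and> length bs = length vs}. \<bar>Dk k y (pre @ bs)\<bar>)"
  using assms
proof (induction vs arbitrary: pre)
  case Nil
  have "card {bs. set bs \<subseteq> (Basis :: 'a set) \<and> length bs = 0} = 1"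
    using card_lists_length_eq[of Basis 0] by simp
  then show ?case by simp
next
  case (Cons v vs)
  let ?L = "{bs. set bs \<subseteq> Basis \<and> length bs = length vs}"
  have "\<bar>Dk k y (pre @ v # vs)\<bar> \<le> norm v * (\<Sum>b\<in>Basis. \<bar>Dk k y (pre @ b # vs)\<bar>)"
    using Cons.prems by (intro linear_abs_le_norm_sum_Basis linear_slot) simp
  also have "\<dots> \<le> norm v * (\<Sum>b\<in>Basis. prod_list (map norm vs) * (\<Sum>bs\<in>?L. \<bar>Dk k y (pre @ b # bs)\<bar>))"
  proof (intro mult_left_mono sum_mono)
    fix b
    show "\<bar>Dk k y (pre @ b # vs)\<bar> \<le> prod_list (map norm vs) * (\<Sum>bs\<in>?L. \<bar>Dk k y (pre @ b # bs)\<bar>)"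
      using Cons.IH[of "pre @ [b]"] Cons.prems by simp
  qed simp
  also have "\<dots> = prod_list (map norm (v # vs)) *
      (\<Sum>cs\<in>{cs. set cs \<subseteq> Basis \<and> length cs = length (v # vs)}. \<bar>Dk k y (pre @ cs)\<bar>)"
    by (simp add: sum_lists_length_Suc sum_distrib_left mult.assoc)
  finally show ?case .
qed

lemma bounded_on_compact:
  assumes "compact K"
  obtains M where "M \<ge> 0"
    "\<And>y vs. y \<in> K \<Longrightarrow> length vs = k \<Longrightarrow> \<bar>Dk k y vs\<bar> \<le> M * prod_list (map norm vs)"
proof -
  define L where "L = {bs. set bs \<subseteq> (Basis :: 'a set) \<and> length bs = k}"
  have "continuous_on K (\<lambda>y. \<Sum>bs\<in>L. \<bar>Dk k y bs\<bar>)"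
    unfolding L_def by (intro continuous_intros continuous_on_tower) simp
  then have "bounded ((\<lambda>y. \<Sum>bs\<in>L. \<bar>Dk k y bs\<bar>) ` K)"
    by (intro compact_imp_bounded compact_continuous_image assms)
  then obtain M where M: "\<And>y. y \<in> K \<Longrightarrow> \<bar>\<Sum>bs\<in>L. \<bar>Dk k y bs\<bar>\<bar> \<le> M"
    unfolding bounded_iff by auto
  show ?thesis
  proof
    show "max M 0 \<ge> 0" by simp
    fix y and vs :: "'a list" assume "y \<in> K" "length vs = k"
    then have "\<bar>Dk k y vs\<bar> \<le> prod_list (map norm vs) * (\<Sum>bs\<in>L. \<bar>Dk k y bs\<bar>)"
      using abs_le_prod_norm_sum_Basis_lists[of "[]" vs k y] unfolding L_def by simp
    also have "\<dots> \<le> prod_list (map norm vs) * max M 0"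
      using M[OF \<open>y \<in> K\<close>] by (intro mult_left_mono) (auto intro!: prod_list_nonneg)
    finally show "\<bar>Dk k y vs\<bar> \<le> max M 0 * prod_list (map norm vs)"
      by (simp add: mult.commute)
  qed
qed

lemma linear_slot_2:
  "linear (\<lambda>w. Dk 2 y [w, v])" "linear (\<lambda>w. Dk 2 y [v, w])"
  using linear_slot[of "[]" "[v]" 2 y] linear_slot[of "[v]" "[]" 2 y] by simp_all

lemma Dk2_normalize: "Dk 2 y [v /\<^sub>R norm v, v /\<^sub>R norm v] = Dk 2 y [v, v] / (norm v)^2"
  using linear_scale[OF linear_slot_2(1)[where y=y and v="v /\<^sub>R norm v"], of "inverse (norm v)" v]
    linear_scale[OF linear_slot_2(2)[where y=y and v=v], of "inverse (norm v)" v]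
  by (simp add: power2_eq_square divide_inverse)

lemma Dk2_diagonal_diff:
  assumes M: "\<And>vs. length vs = 2 \<Longrightarrow> \<bar>Dk 2 y vs\<bar> \<le> M * prod_list (map norm vs)"
  shows "\<bar>Dk 2 y [a, a] - Dk 2 y [b, b]\<bar> \<le> M * (norm a + norm b) * norm (a - b)"
proof -
  have "Dk 2 y [a, a] - Dk 2 y [b, b] = Dk 2 y [a - b, a] + Dk 2 y [b, a - b]"
    using linear_diff[OF linear_slot_2(1), of y a b a] linear_diff[OF linear_slot_2(2), of y b a b]
    by simp
  also have "\<bar>\<dots>\<bar> \<le> M * norm (a - b) * norm a + M * norm b * norm (a - b)"
    using M[of "[a - b, a]"] M[of "[b, a - b]"] by (simp add: mult.assoc)
  finally show ?thesis by (simp add: algebra_simps)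
qed

lemma hess_form_eq:
  assumes "\<And>y. Dk 0 y [] = u y"
  shows "hess_form u x v = Dk 2 x [v, v]"
proof -
  have "u = (\<lambda>z. Dk 0 z [])" using assms by (simp add: fun_eq_iff)
  then have "frechet_derivative u (at y) = (\<lambda>w. Dk 1 y [w])" for y
    using frechet_derivative_at[OF has_derivative_tower[of "[]" 0 y]] by simp
  moreover have "frechet_derivative (\<lambda>y. Dk 1 y [v]) (at x) = (\<lambda>w. Dk 2 x [w, v])"
    using frechet_derivative_at[OF has_derivative_tower[of "[v]" 1 x]] by (simp add: numeral_2_eq_2)
  ultimately show ?thesis unfolding hess_form_def by simp
qed

lemma has_real_derivative_along_line:
  "((\<lambda>t. Dk m (x + t *\<^sub>R v) (replicate m v)) has_real_derivative
      Dk (Suc m) (x + t *\<^sub>R v) (replicate (Suc m) v)) (at t)"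
proof -
  have "((\<lambda>t. Dk m (x + t *\<^sub>R v) (replicate m v)) has_derivative
      (\<lambda>s. Dk (Suc m) (x + t *\<^sub>R v) ((s *\<^sub>R v) # replicate m v))) (at t)"
    by (rule has_derivative_compose[OF _ has_derivative_tower])
       (auto intro!: derivative_eq_intros)
  moreover have "Dk (Suc m) (x + t *\<^sub>R v) ((s *\<^sub>R v) # replicate m v) =
      s * Dk (Suc m) (x + t *\<^sub>R v) (replicate (Suc m) v)" for s
    using linear_scale[OF linear_slot[of "[]" "replicate m v" "Suc m" "x + t *\<^sub>R v"]] by simp
  ultimately show ?thesis
    by (simp add: has_field_derivative_def mult.commute[of _ "Dk _ _ _"])
qed

lemma taylor4_along_line:
  assumes u: "\<And>y. Dk 0 y [] = u y" and "s \<noteq> 0"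
  obtains t where "\<bar>t\<bar> < \<bar>s\<bar>"
    "u (x + s *\<^sub>R v) = u x + s * Dk 1 x [v] + s^2 / 2 * Dk 2 x [v, v] + s^3 / 6 * Dk 3 x [v, v, v]
                        + s^4 / 24 * Dk 4 (x + t *\<^sub>R v) [v, v, v, v]"
proof -
  define g where "g m t = Dk m (x + t *\<^sub>R v) (replicate m v)" for m t
  have "DERIV (g m) t :> g (Suc m) t" for m t
    unfolding g_def by (rule has_real_derivative_along_line)
  moreover have "g 0 = (\<lambda>t. u (x + t *\<^sub>R v))"
    by (simp add: g_def u fun_eq_iff)
  ultimately obtain t where t: "if s < 0 then s < t \<and> t < 0 else 0 < t \<and> t < s"
      and Taylor: "u (x + s *\<^sub>R v) = (\<Sum>m<4. g m 0 / fact m * (s - 0) ^ m) + g 4 t / fact 4 * (s - 0) ^ 4"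
    using Taylor[of 4 g "\<lambda>t. u (x + t *\<^sub>R v)" "- \<bar>s\<bar>" "\<bar>s\<bar>" 0 s] \<open>s \<noteq> 0\<close> by fastforce
  have "\<bar>t\<bar> < \<bar>s\<bar>"
    using t by (auto split: if_splits)
  moreover have "(\<Sum>m<4. f m) = f 0 + f 1 + f 2 + f 3" for f :: "nat \<Rightarrow> real"
    by (simp add: numeral_eq_Suc lessThan_Suc)
  ultimately show ?thesis
    using that[of t] Taylor by (simp add: g_def u numeral_eq_Suc fact_numeral algebra_simps)
qed

lemma second_diff_approx:
  assumes u: "\<And>y. Dk 0 y [] = u y" and "v \<noteq> 0" "h > 0"
    and K: "\<And>y. y \<in> cball x (h * norm v) \<Longrightarrow> \<bar>Dk 4 y [v, v, v, v]\<bar> \<le> K"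
  shows "\<bar>second_diff h v u x - Dk 2 x [v, v] / (norm v)^2\<bar> \<le> K * h^2 / (12 * (norm v)^2)"
proof -
  obtain t1 where "\<bar>t1\<bar> < h" and e1: "u (x + h *\<^sub>R v) = u x + h * Dk 1 x [v] + h^2 / 2 * Dk 2 x [v, v]
      + h^3 / 6 * Dk 3 x [v, v, v] + h^4 / 24 * Dk 4 (x + t1 *\<^sub>R v) [v, v, v, v]"
    using taylor4_along_line[OF u, of h x v] \<open>h > 0\<close> by auto
  obtain t2 where "\<bar>t2\<bar> < h" and e2: "u (x - h *\<^sub>R v) = u x - h * Dk 1 x [v] + h^2 / 2 * Dk 2 x [v, v]
      - h^3 / 6 * Dk 3 x [v, v, v] + h^4 / 24 * Dk 4 (x + t2 *\<^sub>R v) [v, v, v, v]"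
    using taylor4_along_line[OF u, of "-h" x v] \<open>h > 0\<close> by auto
  define E where "E = Dk 4 (x + t1 *\<^sub>R v) [v, v, v, v] + Dk 4 (x + t2 *\<^sub>R v) [v, v, v, v]"
  \<comment> \<open>the odd-order terms cancel in the symmetric difference\<close>
  have "second_diff h v u x - Dk 2 x [v, v] / (norm v)^2 = E * h^2 / (24 * (norm v)^2)"
    unfolding second_diff_def e1 e2 E_def using \<open>h > 0\<close> \<open>v \<noteq> 0\<close>
    by (simp add: field_simps power2_eq_square power4_eq_xxxx)
  moreover have "\<bar>Dk 4 (x + t *\<^sub>R v) [v, v, v, v]\<bar> \<le> K" if "\<bar>t\<bar> < h" for t
  proof -
    have "dist x (x + t *\<^sub>R v) \<le> h * norm v"
      using that by (simp add: dist_norm mult_right_mono)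
    then show ?thesis using K by simp
  qed
  then have "\<bar>E\<bar> * h^2 / (24 * (norm v)^2) \<le> (2 * K) * h^2 / (24 * (norm v)^2)"
    unfolding E_def using \<open>\<bar>t1\<bar> < h\<close> \<open>\<bar>t2\<bar> < h\<close>
    by (intro divide_right_mono mult_right_mono) (smt (verit), simp_all)
  ultimately show ?thesis
    by (simp add: abs_mult)
qed

lemma lambda_h_approx:
  assumes u: "\<And>y. Dk 0 y [] = u y" and S: "finite S" "S \<noteq> {}" "0 \<notin> S"
    and "h > 0" and \<rho>: "\<And>v. v \<in> S \<Longrightarrow> norm v \<le> \<rho>" and "h * \<rho> \<le> R"
    and "M \<ge> 0" and M: "\<And>y vs. y \<in> cball x R \<Longrightarrow> length vs = 4 \<Longrightarrow>
                          \<bar>Dk 4 y vs\<bar> \<le> M * prod_list (map norm vs)"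
  shows "\<bar>lambda_h S h u x - Min (hess_quotient u x ` S)\<bar> \<le> M / 12 * (h * \<rho>)^2"
  unfolding lambda_h_def
proof (rule Min_image_diff_le[OF S(1,2)])
  fix v assume "v \<in> S"
  then have "v \<noteq> 0" "norm v \<le> \<rho>" using S(3) \<rho> by auto
  have "\<bar>Dk 4 y [v, v, v, v]\<bar> \<le> M * norm v ^ 4" if "y \<in> cball x (h * norm v)" for y
  proof -
    have "h * norm v \<le> R"
      using mult_left_mono[OF \<open>norm v \<le> \<rho>\<close>, of h] \<open>h > 0\<close> \<open>h * \<rho> \<le> R\<close> by linarith
    with that show ?thesis using M[of y "[v, v, v, v]"] by (simp add: power4_eq_xxxx mult.assoc)
  qed
  from second_diff_approx[OF u \<open>v \<noteq> 0\<close> \<open>h > 0\<close> this]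
  have "\<bar>second_diff h v u x - hess_quotient u x v\<bar> \<le> M / 12 * (h * norm v)^2"
    using \<open>v \<noteq> 0\<close> by (simp add: hess_quotient_def hess_form_eq[OF u] field_simps power2_eq_square power4_eq_xxxx)
  also have "\<dots> \<le> M / 12 * (h * \<rho>)^2"
    using \<open>norm v \<le> \<rho>\<close> \<open>h > 0\<close> \<open>M \<ge> 0\<close> by (intro mult_left_mono power_mono) auto
  finally show "\<bar>second_diff h v u x - hess_quotient u x v\<bar> \<le> M / 12 * (h * \<rho>)^2" .
qed

lemma hess_quotient_eq:
  assumes "\<And>y. Dk 0 y [] = u y"
  shows "hess_quotient u x v = Dk 2 x [sgn v, sgn v]"
  by (simp add: hess_quotient_def hess_form_eq[OF assms] Dk2_normalize sgn_div_norm)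

lemma hess_quotient_bounded:
  assumes u: "\<And>y. Dk 0 y [] = u y" and "M \<ge> 0"
    and M: "\<And>vs. length vs = 2 \<Longrightarrow> \<bar>Dk 2 x vs\<bar> \<le> M * prod_list (map norm vs)"
  shows "\<bar>hess_quotient u x v\<bar> \<le> M"
proof -
  have "norm (sgn v) * norm (sgn v) \<le> 1"
    by (simp add: norm_sgn mult_le_one)
  then have "M * (norm (sgn v) * norm (sgn v)) \<le> M"
    using \<open>M \<ge> 0\<close> by (simp add: mult_left_le)
  then show ?thesis
    using M[of "[sgn v, sgn v]"] by (simp add: hess_quotient_eq[OF u])
qed

lemma hess_quotient_angle_bound:
  assumes u: "\<And>y. Dk 0 y [] = u y" and "v \<noteq> 0" "w \<noteq> 0"
    and M: "\<And>vs. length vs = 2 \<Longrightarrow> \<bar>Dk 2 x vs\<bar> \<le> M * prod_list (map norm vs)"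
  shows "hess_quotient u x v \<le> hess_quotient u x w + 2 * M * arccos ((w /\<^sub>R norm w) \<bullet> (v /\<^sub>R norm v))"
proof -
  have unit: "norm (sgn v) = 1" "norm (sgn w) = 1"
    using assms(2,3) by (simp_all add: norm_sgn)
  have "\<bar>hess_quotient u x w - hess_quotient u x v\<bar> \<le> M * 2 * norm (sgn w - sgn v)"
    using Dk2_diagonal_diff[OF M, of "sgn w" "sgn v"] unit by (simp add: hess_quotient_eq[OF u])
  moreover have "M \<ge> 0"
    using M[of "[sgn v, sgn v]"] unit by simp
  moreover have "norm (sgn w - sgn v) \<le> arccos (sgn w \<bullet> sgn v)"
    by (rule norm_diff_le_arccos[OF unit(2,1)])
  ultimately show ?thesis
    unfolding sgn_div_norm[symmetric] by (smt (verit) mult_left_mono)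
qed

end
lemma add_mult_le_add_mult_add:
  fixes a b x y :: "'a::linordered_semiring"
  assumes "0 \<le> a" "0 \<le> b" "0 \<le> x" "0 \<le> y"
  shows "a * x + b * y \<le> (a + b) * (x + y)"
  using assms by (simp add: algebra_simps add_increasing add_increasing2)

lemma direction_set_nonempty:
  assumes "direction_set D"
  shows "D \<noteq> {}"
proof
  assume "D = {}"
  then have "(UNIV :: 'a set) = {0}"
    using assms unfolding direction_set_def by simp
  moreover obtain b :: 'a where "b \<in> Basis"
    using nonempty_Basis by blast
  ultimately show False
    using nonzero_Basis by auto
qed

lemma norm_le_grid_width:
  fixes DW :: "(real^'n) set"
  assumes "finite DW" "v \<in> DW"
  shows "norm v \<le> sqrt CARD('n) * grid_width DW"
proof -
  have "infnorm v \<le> grid_width DW"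
    unfolding grid_width_def using assms by simp
  then show ?thesis
    using norm_le_infnorm[of v] by (simp add: order_trans mult_left_mono)
qed

lemma lambda_h_minus_lambda_D_le:
  fixes Dk :: "nat \<Rightarrow> real^'n \<Rightarrow> (real^'n) list \<Rightarrow> real"
  assumes "derivative_tower Dk" and u: "\<And>y. Dk 0 y [] = u y"
    and M4: "M4 \<ge> 0" "\<And>y vs. y \<in> cball x (sqrt CARD('n)) \<Longrightarrow> length vs = 4 \<Longrightarrow>
                              \<bar>Dk 4 y vs\<bar> \<le> M4 * prod_list (map norm vs)"
    and M2: "M2 \<ge> 0" "\<And>vs. length vs = 2 \<Longrightarrow> \<bar>Dk 2 x vs\<bar> \<le> M2 * prod_list (map norm vs)"
    and D: "direction_set D" and DW: "grid_direction_set DW" "DW \<subseteq> D"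
    and h: "0 < h" "grid_width DW * h \<le> 1"
  shows "\<bar>lambda_h DW h u x - lambda_D D u x\<bar>
           \<le> M4 * CARD('n) / 12 * (grid_width DW * h)^2 + 2 * M2 * dir_resolution D DW"
proof -
  interpret derivative_tower Dk by fact
  define r where "r = sqrt CARD('n)"
  have DW': "finite DW" "DW \<noteq> {}" "0 \<notin> DW" and "0 \<notin> D"
    using D DW direction_set_nonempty unfolding grid_direction_set_def direction_set_def by auto
  have "r * (grid_width DW * h) \<le> r * 1"
    using h(2) by (intro mult_left_mono) (simp_all add: r_def)
  then have hr: "h * (r * grid_width DW) \<le> r"
    by (simp add: algebra_simps)
  have "\<bar>lambda_h DW h u x - Min (hess_quotient u x ` DW)\<bar> \<le> M4 / 12 * (h * (r * grid_width DW))^2"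
    by (rule lambda_h_approx[OF u DW' h(1) norm_le_grid_width[OF DW'(1), folded r_def] hr
          M4(1) M4(2)[folded r_def]])
  also have "\<dots> = M4 * CARD('n) / 12 * (grid_width DW * h)^2"
    by (simp add: r_def power_mult_distrib)
  finally have "\<bar>lambda_h DW h u x - Min (hess_quotient u x ` DW)\<bar> \<le> \<dots>" .
  moreover have "bdd_below (hess_quotient u x ` D)"
    using hess_quotient_bounded[OF u M2] by (intro bdd_belowI2[of _ "- M2"]) (metis abs_le_D2 minus_le_iff)
  then have "\<bar>Min (hess_quotient u x ` DW) - lambda_D D u x\<bar> \<le> 2 * M2 * dir_resolution D DW"
    unfolding lambda_D_eq_INF_hess_quotient using DW' DW(2) M2 \<open>0 \<notin> D\<close>
    by (intro Min_INF_diff_le_dir_resolution hess_quotient_angle_bound[OF u]) auto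
  ultimately show ?thesis by linarith
qed

theorem mainTheorem10:
  fixes u :: "real^'n \<Rightarrow> real" and x :: "real^'n"
  assumes "smooth_fun u"
  shows "\<exists>C \<delta>. \<delta> > 0 \<and>
    (\<forall>D DW h. direction_set D \<longrightarrow> grid_direction_set DW \<longrightarrow> DW \<subseteq> D \<longrightarrow>
       dir_resolution D DW < pi / 2 \<longrightarrow> 0 < h \<longrightarrow> grid_width DW * h \<le> \<delta> \<longrightarrow>
       \<bar>lambda_h DW h u x - lambda_D D u x\<bar>
         \<le> C * ((grid_width DW * h)^2 + dir_resolution D DW))"
proof -
  obtain Dk where u: "\<And>y. Dk 0 y [] = u y" and tower: "derivative_tower Dk"
    using assms unfolding smooth_fun_def derivative_tower_def by blast
  interpret derivative_tower Dk by (fact tower)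
  obtain M4 where M4: "M4 \<ge> 0"
    "\<And>y vs. y \<in> cball x (sqrt CARD('n)) \<Longrightarrow> length vs = 4 \<Longrightarrow> \<bar>Dk 4 y vs\<bar> \<le> M4 * prod_list (map norm vs)"
    using bounded_on_compact[OF compact_cball] by blast
  obtain M2 where "M2 \<ge> 0"
    "\<And>y vs. y \<in> {x} \<Longrightarrow> length vs = 2 \<Longrightarrow> \<bar>Dk 2 y vs\<bar> \<le> M2 * prod_list (map norm vs)"
    by (rule bounded_on_compact[where K="{x}" and k=2]) simp_all
  note M2 = this(1) this(2)[OF singletonI]
  define C where "C = M4 * CARD('n) / 12 + 2 * M2"
  \<comment> \<open>the estimate holds whenever \<open>W h \<le> 1\<close> and does not need \<open>d\<theta> < \<pi>/2\<close>\<close>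
  have "\<bar>lambda_h DW h u x - lambda_D D u x\<bar> \<le> C * ((grid_width DW * h)^2 + dir_resolution D DW)"
    if "direction_set D" "grid_direction_set DW" "DW \<subseteq> D" "0 < h" "grid_width DW * h \<le> 1" for D DW h
  proof -
    have "0 \<le> dir_resolution D DW"
      using that direction_set_nonempty
      by (intro dir_resolution_nonneg) (auto simp: grid_direction_set_def)
    with M4(1) M2(1) show ?thesis unfolding C_def
      by (intro order_trans[OF lambda_h_minus_lambda_D_le[OF tower u M4 M2 that] add_mult_le_add_mult_add])
         simp_all
  qed
  then show ?thesis by (intro exI[of _ C] exI[of _ 1]) auto
qed

end
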